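(* For each integer $n\ge1$, define the polynomial $$A_n(t)=\sum_{k=0}^{n}\frac{\cos\left(\frac{(n-k)\pi}{2}\right)k^n}{(n-k)!!\,(n+k)!!}\,t^k .$$ Then $A_n(t)=\frac{(-1)^n}{n!}\sum_{k=0}^{\lfloor n/2\rfloor}(-1)^k\binom{n}{k}\left(k-\frac{n}{2}\right)^n t^{n-2k}$, $A_n(0)=0$, $A_n(1)=\tfrac12$, and for $t\neq0$, $$A_n(t)+A_n(1/t)=\frac{(-1)^n}{n!}\sum_{k=0}^{n}(-1)^k\binom{n}{k}\left(k-\frac{n}{2}\right)^n t^{n-2k}.$$ Moreover, for $|t|$ and $|z|$ sufficiently small, $\sum_{n=1}^\infty t^nJ_n(nz)=\sum_{n=1}^\infty A_n(t)z^n$.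
   Context: $m!!$ denotes the double factorial, with $0!!=1$ (and $m!!=m\,(m-2)!!$, $1!!=1$). $J_n$ is the Bessel function of the first kind of order $n$. $\lfloor\cdot\rfloor$ denotes the integer part; $0^0$ is interpreted as $1$ where it occurs (the $k=0$ term in the first sum has $k^n=0$ for $n\ge1$). *)

theory Defs
  imports Complex_Main
begin

fun dfact :: "nat \<Rightarrow> nat" where
  "dfact 0 = 1"
| "dfact (Suc 0) = 1"
| "dfact (Suc (Suc m)) = Suc (Suc m) * dfact m"

definition besselJ :: "nat \<Rightarrow> real \<Rightarrow> real" where
  "besselJ n x = (\<Sum>m. (-1) ^ m / (fact m * fact (m + n)) * (x / 2) ^ (2 * m + n))"

definition A :: "nat \<Rightarrow> real \<Rightarrow> real" where
  "A n t = (\<Sum>k=0..n. cos (real (n - k) * pi / 2) * real k ^ n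
              / (real (dfact (n - k)) * real (dfact (n + k))) * t ^ k)"

end

theory Submission
  imports Defs "HOL-Analysis.Analysis"
begin

(* Keeping only the indices with n - k even, the double-factorial coefficients of A n become
   (-1)^n / n! times kapteyn_coeff n k = (-1)^k C(n,k) (k - n/2)^n, which is symmetric under
   k |-> n - k and vanishes at k = n/2. This symmetry folds the full sum over 0..n into
   A n t + A n (1/t); at t = 1 the full sum is the n-th finite difference of x^n, namely (-1)^n n!,
   so A n 1 = 1/2.
   For the series identity, expand J_n(n z) in its power series. The resulting double series,
   indexed by the order n and the summation index m, is dominated by (e |z|)^(n + 2m), so it may be
   summed by rows, which gives the Bessel series, or along the classes n + 2m = N, whose sums are
   exactly A N t * z^N. *)

lemma alternating_binomial_sum_Suc:
  fixes f :: "nat \<Rightarrow> 'a::comm_ring_1"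
  shows "(\<Sum>k\<le>Suc n. (-1)^k * of_nat (Suc n choose k) * f k)
       = (\<Sum>k\<le>n. (-1)^k * of_nat (n choose k) * (f k - f (Suc k)))"
proof -
  have "(\<Sum>k\<le>Suc n. (-1)^k * of_nat (Suc n choose k) * f k)
      = f 0 + (\<Sum>k\<le>n. (-1)^Suc k * of_nat (Suc n choose Suc k) * f (Suc k))"
    by (subst sum.atMost_Suc_shift) simp
  also have "\<dots> = (f 0 + (\<Sum>k\<le>n. (-1)^Suc k * of_nat (n choose Suc k) * f (Suc k)))
                 - (\<Sum>k\<le>n. (-1)^k * of_nat (n choose k) * f (Suc k))"
    by (simp add: sum.distrib[symmetric] sum_subtractf[symmetric] algebra_simps)
  also have "f 0 + (\<Sum>k\<le>n. (-1)^Suc k * of_nat (n choose Suc k) * f (Suc k))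
      = (\<Sum>k\<le>n. (-1)^k * of_nat (n choose k) * f k)"
    using sum.atMost_Suc_shift[of "\<lambda>k. (-1)^k * of_nat (n choose k) * f k" n]
    by (simp add: binomial_eq_0)
  finally show ?thesis
    by (simp add: sum_subtractf algebra_simps)
qed

lemma alternating_binomial_sum_power:
  fixes x :: "'a::comm_ring_1"
  assumes "m \<le> n"
  shows "(\<Sum>k\<le>n. (-1)^k * of_nat (n choose k) * (x + of_nat k)^m)
       = (if m = n then (-1)^n * of_nat (fact n) else 0)"
  using assms
proof (induction n arbitrary: m)
  case (Suc n)
  let ?S = "\<lambda>i. \<Sum>k\<le>n. (-1)^k * of_nat (n choose k) * (x + of_nat k)^i"
  have shift: "(x + of_nat k)^m - (x + of_nat (Suc k))^m
             = - (\<Sum>i<m. of_nat (m choose i) * (x + of_nat k)^i)" for k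
    using binomial_ring[of "x + of_nat k" 1 m]
    by (simp add: lessThan_Suc_atMost[symmetric] ac_simps)
  have "(\<Sum>k\<le>Suc n. (-1)^k * of_nat (Suc n choose k) * (x + of_nat k)^m)
      = - (\<Sum>i<m. of_nat (m choose i) * ?S i)"
    unfolding alternating_binomial_sum_Suc shift
    by (simp add: sum_distrib_left sum_negf mult_ac sum.swap[of _ "{..<m}"])
  also have "\<dots> = - (\<Sum>i<m. of_nat (m choose i)
                          * (if i = n then (-1)^n * of_nat (fact n) else 0))"
    using Suc by (intro arg_cong[where f=uminus] sum.cong) auto
  also have "\<dots> = (if m = Suc n then (-1)^Suc n * of_nat (fact (Suc n)) else 0)"
    using Suc.prems by (auto simp: if_distrib[of "(*) _"] algebra_simps)
  finally show ?case .
qed simp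

lemma sum_atLeast0_atMost_even_indices:
  fixes g :: "nat \<Rightarrow> 'a::comm_monoid_add"
  assumes "\<And>j. j \<le> n \<Longrightarrow> odd j \<Longrightarrow> g j = 0"
  shows "(\<Sum>j=0..n. g j) = (\<Sum>i=0..n div 2. g (2 * i))"
proof -
  have "(\<Sum>i=0..n div 2. g (2 * i)) = sum g ((*) 2 ` {0..n div 2})"
    by (subst sum.reindex) (auto simp: inj_on_def)
  also have "\<dots> = (\<Sum>j=0..n. g j)"
  proof (rule sum.mono_neutral_left)
    show "\<forall>j\<in>{0..n} - (*) 2 ` {0..n div 2}. g j = 0"
    proof
      fix j assume j: "j \<in> {0..n} - (*) 2 ` {0..n div 2}"
      then have "odd j"
        by (auto simp: image_iff elim!: evenE dest: spec[of _ "j div 2"])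
      with j show "g j = 0" using assms by auto
    qed
  qed auto
  finally show ?thesis ..
qed

lemma sum_atLeast0_atMost_mirror_pairs:
  fixes G :: "nat \<Rightarrow> 'a::comm_monoid_add"
  assumes "\<And>k. 2 * k = n \<Longrightarrow> G k = 0"
  shows "(\<Sum>k=0..n. G k) = (\<Sum>k | 2 * k < n. G k + G (n - k))"
proof -
  let ?L = "{k. 2 * k < n}" and ?R = "(\<lambda>k. n - k) ` {k. 2 * k < n}"
  have fin: "finite ?L"
    by (rule finite_subset[of _ "{..<n}"]) auto
  have "(\<Sum>k=0..n. G k) = (\<Sum>k \<in> ?L \<union> ?R. G k)"
  proof (rule sum.mono_neutral_right)
    show "\<forall>k\<in>{0..n} - (?L \<union> ?R). G k = 0"
    proof
      fix k assume k: "k \<in> {0..n} - (?L \<union> ?R)"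
      have "2 * k = n"
      proof (rule ccontr)
        assume "2 * k \<noteq> n"
        with k have "n - k \<in> ?L" and "k = n - (n - k)" by auto
        with k show False by blast
      qed
      then show "G k = 0" by (rule assms)
    qed
  qed auto
  also have "\<dots> = (\<Sum>k \<in> ?L. G k) + (\<Sum>k \<in> ?R. G k)"
    by (rule sum.union_disjoint) (use fin in auto)
  also have "(\<Sum>k \<in> ?R. G k) = (\<Sum>k \<in> ?L. G (n - k))"
    by (subst sum.reindex) (auto simp: inj_on_def)
  finally show ?thesis
    by (simp add: sum.distrib)
qed

lemma cos_of_nat_mult_pi_half:
  "cos (real m * pi / 2) = (if even m then (-1) ^ (m div 2) else 0)"
proof (cases "even m")
  case True
  then obtain i where "m = 2 * i" by (rule evenE)
  then show ?thesis by simp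
next
  case False
  then obtain i where "m = 2 * i + 1" by (rule oddE)
  then have "cos (real m * pi / 2) = cos (real i * pi + pi / 2)"
    by (intro arg_cong[where f = cos]) (simp add: field_simps)
  then show ?thesis using False by (simp add: cos_add)
qed

lemma dfact_double: "dfact (2 * i) = 2 ^ i * fact i"
  by (induction i) (simp_all add: mult_2 algebra_simps)

definition kapteyn_coeff :: "nat \<Rightarrow> nat \<Rightarrow> real" where
  "kapteyn_coeff n k = (-1) ^ k * real (n choose k) * (real k - real n / 2) ^ n"

lemma kapteyn_coeff_symmetric:
  assumes "k \<le> n"
  shows "kapteyn_coeff n (n - k) = kapteyn_coeff n k"
proof -
  have "real (n - k) - real n / 2 = - (real k - real n / 2)"
    using assms by simp
  then have "(real (n - k) - real n / 2) ^ n = (-1) ^ n * (real k - real n / 2) ^ n"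
    by (metis power_minus)
  moreover have "(-1::real) ^ (n - k) * (-1) ^ n = (-1) ^ k"
  proof -
    have "n - k + n = k + 2 * (n - k)"
      using assms by simp
    then show ?thesis
      by (simp only: power_add[symmetric]) (simp add: power_add power_mult)
  qed
  ultimately show ?thesis
    unfolding kapteyn_coeff_def binomial_symmetric[OF assms, symmetric]
    by (simp flip: \<open>(-1) ^ (n - k) * (-1) ^ n = (-1) ^ k\<close> add: mult_ac)
qed

lemma kapteyn_coeff_middle:
  assumes "n \<noteq> 0" and "2 * k = n"
  shows "kapteyn_coeff n k = 0"
proof -
  have "real k - real n / 2 = 0"
    by (simp flip: assms(2))
  then show ?thesis
    using assms(1) by (simp add: kapteyn_coeff_def)
qed

lemma sum_kapteyn_coeff: "(\<Sum>k=0..n. kapteyn_coeff n k) = (-1) ^ n * fact n"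
  using alternating_binomial_sum_power[of n n "- real n / 2"]
  by (simp add: kapteyn_coeff_def atLeast0AtMost)

lemma kapteyn_coeff_eq_fact:
  assumes "j \<le> n"
  shows "(-1) ^ n / fact n * kapteyn_coeff n j
       = (-1) ^ j * (real n - 2 * real j) ^ n / (2 ^ n * (fact j * fact (n - j)))"
proof -
  have "real j - real n / 2 = - ((real n - 2 * real j) / 2)"
    by (simp add: field_simps)
  then have "(real j - real n / 2) ^ n = (-1) ^ n * (real n - 2 * real j) ^ n / 2 ^ n"
    by (metis power_minus power_divide times_divide_eq_right)
  moreover have "real (n choose j) = fact n / (fact j * fact (n - j))"
    using binomial_fact[OF assms] by simp
  ultimately show ?thesis
    by (simp add: kapteyn_coeff_def field_simps flip: power_add)
qed

lemma A_eq_sum_kapteyn_coeff: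
  "A n t = (-1) ^ n / fact n * (\<Sum>k=0..n div 2. kapteyn_coeff n k * t ^ (n - 2 * k))"
proof -
  define a where "a j = cos (real j * pi / 2) * real (n - j) ^ n
      / (real (dfact j) * real (dfact (2 * n - j))) * t ^ (n - j)" for j
  have "A n t = (\<Sum>j=0..n. a j)"
    unfolding A_def a_def by (subst sum.atLeastAtMost_rev) (intro sum.cong; simp)
  also have "\<dots> = (\<Sum>i=0..n div 2. a (2 * i))"
    by (rule sum_atLeast0_atMost_even_indices) (simp add: a_def cos_of_nat_mult_pi_half)
  also have "\<dots> = (\<Sum>i=0..n div 2. (-1) ^ n / fact n * kapteyn_coeff n i * t ^ (n - 2 * i))"
  proof (rule sum.cong[OF refl])
    fix i assume "i \<in> {0..n div 2}"
    then have i: "2 * i \<le> n" by simp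
    have "2 * n - 2 * i = 2 * (n - i)" by simp
    moreover have "real (dfact (2 * i)) * real (dfact (2 * (n - i)))
        = 2 ^ n * (fact i * fact (n - i))"
      using i unfolding dfact_double by (simp add: mult_ac flip: power_add)
    ultimately have "a (2 * i) = (-1) ^ i * (real n - 2 * real i) ^ n
        / (2 ^ n * (fact i * fact (n - i))) * t ^ (n - 2 * i)"
      using i by (simp add: a_def cos_of_nat_mult_pi_half)
    also have "\<dots> = (-1) ^ n / fact n * kapteyn_coeff n i * t ^ (n - 2 * i)"
      using i by (subst kapteyn_coeff_eq_fact) auto
    finally show "a (2 * i) = (-1) ^ n / fact n * kapteyn_coeff n i * t ^ (n - 2 * i)" .
  qed
  finally show ?thesis
    by (simp add: sum_distrib_left mult_ac)
qed

lemma A_eq_sum_kapteyn_coeff_below_half: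
  assumes "n \<noteq> 0"
  shows "A n t = (-1) ^ n / fact n * (\<Sum>k | 2 * k < n. kapteyn_coeff n k * t ^ (n - 2 * k))"
proof -
  have "2 * k < n" if "k \<le> n div 2" and "kapteyn_coeff n k \<noteq> 0" for k
    using that kapteyn_coeff_middle[OF assms, of k] by linarith
  then show ?thesis
    unfolding A_eq_sum_kapteyn_coeff
    by (intro arg_cong[where f = "(*) _"] sum.mono_neutral_right) auto
qed

lemma A_zero:
  assumes "n \<noteq> 0"
  shows "A n 0 = 0"
  unfolding A_def using assms by (intro sum.neutral) auto

lemma A_add_A_inverse:
  assumes "n \<noteq> 0" and "t \<noteq> 0"
  shows "A n t + A n (1 / t) = (-1) ^ n / fact n *
           (\<Sum>k=0..n. kapteyn_coeff n k * t powi (int n - 2 * int k))"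
proof -
  have "(\<Sum>k=0..n. kapteyn_coeff n k * t powi (int n - 2 * int k))
      = (\<Sum>k | 2 * k < n. kapteyn_coeff n k * t powi (int n - 2 * int k)
                         + kapteyn_coeff n (n - k) * t powi (int n - 2 * int (n - k)))"
    by (rule sum_atLeast0_atMost_mirror_pairs) (use assms kapteyn_coeff_middle in simp)
  also have "\<dots> = (\<Sum>k | 2 * k < n. kapteyn_coeff n k * t ^ (n - 2 * k)
                                   + kapteyn_coeff n k * (1 / t) ^ (n - 2 * k))"
  proof (rule sum.cong[OF refl])
    fix k assume "k \<in> {k. 2 * k < n}"
    then have "k \<le> n" and "int n - 2 * int k = int (n - 2 * k)"
      and "int n - 2 * int (n - k) = - int (n - 2 * k)" by auto
    then show "kapteyn_coeff n k * t powi (int n - 2 * int k)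
               + kapteyn_coeff n (n - k) * t powi (int n - 2 * int (n - k))
             = kapteyn_coeff n k * t ^ (n - 2 * k) + kapteyn_coeff n k * (1 / t) ^ (n - 2 * k)"
      by (simp only: kapteyn_coeff_symmetric power_int_minus power_int_of_nat
          power_one_over inverse_eq_divide)
  qed
  finally show ?thesis
    using assms(1) by (simp add: A_eq_sum_kapteyn_coeff_below_half sum.distrib distrib_left)
qed

lemma A_one:
  assumes "n \<noteq> 0"
  shows "A n 1 = 1 / 2"
proof -
  have "A n 1 + A n 1 = 1"
    using A_add_A_inverse[OF assms, of 1] by (simp add: sum_kapteyn_coeff flip: power_add)
  then show ?thesis by simp
qed

lemma power_div_fact_le_exp:
  fixes x :: real
  assumes "0 \<le> x"
  shows "x ^ n / fact n \<le> exp x"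
proof -
  have "(\<lambda>k. x ^ k /\<^sub>R fact k) sums exp x"
    by (rule exp_converges)
  moreover have "(\<Sum>k\<in>{n}. x ^ k /\<^sub>R fact k) \<le> (\<Sum>k. x ^ k /\<^sub>R fact k)"
    using calculation assms by (intro sum_le_suminf) (auto simp: sums_iff)
  ultimately show ?thesis
    by (simp add: sums_iff divide_inverse_commute)
qed

lemma summable_on_geometric_weight:
  fixes q :: real
  assumes "0 \<le> q" and "q < 1"
  shows "(\<lambda>(n, m). q ^ (n + 2 * m)) summable_on (UNIV :: (nat \<times> nat) set)"
proof -
  have q2: "norm (q ^ 2) < 1"
    using assms by (simp add: abs_square_less_1)
  have "((\<lambda>m. q ^ (n + 2 * m)) has_sum q ^ n / (1 - q ^ 2)) UNIV" for n
  proof -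
    have "(\<lambda>m. q ^ n * (q ^ 2) ^ m) sums (q ^ n * (1 / (1 - q ^ 2)))"
      using geometric_sums[OF q2] by (rule sums_mult)
    then show ?thesis
      using assms(1) by (intro sums_nonneg_imp_has_sum) (simp_all add: power_add power_mult)
  qed
  moreover have "(\<lambda>n. q ^ n / (1 - q ^ 2)) summable_on UNIV"
    using assms q2
    by (intro summable_nonneg_imp_summable_on summable_divide summable_geometric) auto
  ultimately have "(\<lambda>(n, m). q ^ (n + 2 * m)) summable_on Sigma UNIV (\<lambda>_. UNIV)"
    using assms(1) by (intro summable_on_SigmaI[where g = "\<lambda>n. q ^ n / (1 - q ^ 2)"]) auto
  then show ?thesis by simp
qed

lemma sums_rows_and_sums_weight_classes:
  fixes F :: "nat \<times> nat \<Rightarrow> 'a::banach"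
  assumes F: "F summable_on UNIV"
    and rows: "\<And>n. (\<lambda>m. F (n, m)) sums r n"
  shows "r sums (\<Sum>\<^sub>\<infinity>x. F x)"
    and "(\<lambda>N. \<Sum>m | 2 * m \<le> N. F (N - 2 * m, m)) sums (\<Sum>\<^sub>\<infinity>x. F x)"
proof -
  have F_has_sum: "(F has_sum (\<Sum>\<^sub>\<infinity>x. F x)) (Sigma UNIV (\<lambda>_. UNIV))"
    using F by (simp add: has_sum_infsum)
  have "((\<lambda>m. F (n, m)) has_sum r n) UNIV" for n
  proof -
    have "(\<lambda>m. F (n, m)) summable_on UNIV"
      using summable_on_reindex[of "Pair n" UNIV F] summable_on_subset_banach[OF F]
      by (simp add: o_def inj_on_def)
    then have "((\<lambda>m. F (n, m)) has_sum (\<Sum>\<^sub>\<infinity>m. F (n, m))) UNIV"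
      by (rule has_sum_infsum)
    moreover from this have "r n = (\<Sum>\<^sub>\<infinity>m. F (n, m))"
      using rows sums_unique2 has_sum_imp_sums by blast
    ultimately show ?thesis by simp
  qed
  then show "r sums (\<Sum>\<^sub>\<infinity>x. F x)"
    by (intro has_sum_imp_sums has_sum_SigmaD[OF F_has_sum]) auto
  have regrouped: "((\<lambda>(N, m). F (N - 2 * m, m)) has_sum (\<Sum>\<^sub>\<infinity>x. F x))
      (Sigma UNIV (\<lambda>N. {m. 2 * m \<le> N}))"
    using F_has_sum
    by (subst has_sum_reindex_bij_witness[where j = "\<lambda>(n, m). (n + 2 * m, m)"
          and i = "\<lambda>(N, m). (N - 2 * m, m)", symmetric]) auto
  have finite_weight_class: "finite {m. 2 * m \<le> N}" for N :: nat
    by (rule finite_subset[of _ "{..N}"]) auto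
  have "((\<lambda>N. \<Sum>m | 2 * m \<le> N. F (N - 2 * m, m)) has_sum (\<Sum>\<^sub>\<infinity>x. F x)) UNIV"
    by (rule has_sum_SigmaD[OF regrouped]) (simp add: finite_weight_class)
  then show "(\<lambda>N. \<Sum>m | 2 * m \<le> N. F (N - 2 * m, m)) sums (\<Sum>\<^sub>\<infinity>x. F x)"
    by (rule has_sum_imp_sums)
qed

definition besselJ_term :: "nat \<Rightarrow> real \<Rightarrow> nat \<Rightarrow> real" where
  "besselJ_term n x m = (-1) ^ m / (fact m * fact (m + n)) * (x / 2) ^ (2 * m + n)"

lemma besselJ_eq_suminf: "besselJ n x = (\<Sum>m. besselJ_term n x m)"
  by (simp add: besselJ_def besselJ_term_def)

lemma abs_besselJ_term_le:
  "\<bar>besselJ_term n (real n * z) m\<bar> \<le> (exp 1 * \<bar>z\<bar>) ^ (2 * m + n)"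
proof -
  define N where "N = 2 * m + n"
  have mN: "m \<le> N" and m_plus_n: "m + n = N - m"
    unfolding N_def by auto
  have "fact N = fact m * fact (N - m) * real (N choose m)"
    using binomial_fact_lemma[OF mN] by (metis of_nat_fact of_nat_mult)
  also have "\<dots> \<le> fact m * fact (N - m) * 2 ^ N"
    using binomial_le_pow2[of N m] by (intro mult_left_mono) (simp_all flip: of_nat_le_iff)
  finally have "1 / (fact m * fact (m + n)) \<le> (2::real) ^ N / fact N"
    unfolding m_plus_n by (simp add: field_simps)
  moreover have "(real n * \<bar>z\<bar> / 2) ^ N \<le> (real N * \<bar>z\<bar> / 2) ^ N"
    by (intro power_mono) (auto simp: N_def intro!: mult_right_mono)
  ultimately have "1 / (fact m * fact (m + n)) * (real n * \<bar>z\<bar> / 2) ^ N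
      \<le> (2 ^ N / fact N) * (real N * \<bar>z\<bar> / 2) ^ N"
    by (intro mult_mono) auto
  then have "\<bar>besselJ_term n (real n * z) m\<bar> \<le> (2 ^ N / fact N) * (real N * \<bar>z\<bar> / 2) ^ N"
    by (simp add: besselJ_term_def abs_mult power_abs N_def)
  also have "\<dots> = real N ^ N / fact N * \<bar>z\<bar> ^ N"
    by (simp add: power_mult_distrib power_divide)
  also have "\<dots> \<le> exp (real N) * \<bar>z\<bar> ^ N"
    by (intro mult_right_mono power_div_fact_le_exp) auto
  also have "\<dots> = (exp 1 * \<bar>z\<bar>) ^ N"
    by (simp add: power_mult_distrib flip: exp_of_nat_mult)
  finally show ?thesis
    unfolding N_def .
qed

lemma besselJ_term_sums:
  assumes "exp 1 * \<bar>z\<bar> < 1"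
  shows "besselJ_term n (real n * z) sums besselJ n (real n * z)"
proof -
  have "summable (\<lambda>m. (exp 1 * \<bar>z\<bar>) ^ (2 * m + n))"
    using assms summable_geometric[of "(exp 1 * \<bar>z\<bar>) ^ 2"]
    by (auto simp: power_add power_mult abs_square_less_1 intro: summable_mult2)
  then have "summable (besselJ_term n (real n * z))"
    by (rule summable_comparison_test') (simp add: abs_besselJ_term_le)
  then show ?thesis
    unfolding besselJ_eq_suminf by (rule summable_sums)
qed

lemma power_mult_besselJ_term_eq_kapteyn_coeff:
  assumes "2 * m \<le> N"
  shows "t ^ (N - 2 * m) * besselJ_term (N - 2 * m) (real (N - 2 * m) * z) m
       = (-1) ^ N / fact N * kapteyn_coeff N m * t ^ (N - 2 * m) * z ^ N"
proof -
  have "m \<le> N" and "m + (N - 2 * m) = N - m" and "2 * m + (N - 2 * m) = N"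
    and "real (N - 2 * m) = real N - 2 * real m"
    using assms by auto
  then have "besselJ_term (N - 2 * m) (real (N - 2 * m) * z) m
      = (-1) ^ m * (real N - 2 * real m) ^ N / (2 ^ N * (fact m * fact (N - m))) * z ^ N"
    by (simp add: besselJ_term_def power_mult_distrib power_divide mult_ac)
  then show ?thesis
    unfolding kapteyn_coeff_eq_fact[OF \<open>m \<le> N\<close>] by (simp only: mult_ac)
qed

lemma A_mul_power_eq_sum_besselJ_term:
  assumes "N \<noteq> 0"
  shows "A N t * z ^ N
       = (\<Sum>m | 2 * m < N. t ^ (N - 2 * m) * besselJ_term (N - 2 * m) (real (N - 2 * m) * z) m)"
  unfolding A_eq_sum_kapteyn_coeff_below_half[OF assms] sum_distrib_left sum_distrib_right
  by (intro sum.cong refl, subst power_mult_besselJ_term_eq_kapteyn_coeff) (simp_all add: mult_ac)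

lemma kapteyn_series_sums:
  fixes t z :: real
  assumes t: "\<bar>t\<bar> \<le> 1" and z: "exp 1 * \<bar>z\<bar> < 1"
  shows "\<exists>S. (\<lambda>m. t ^ (m + 1) * besselJ (m + 1) (real (m + 1) * z)) sums S
           \<and> (\<lambda>m. A (m + 1) t * z ^ (m + 1)) sums S"
proof -
  define q where "q = exp 1 * \<bar>z\<bar>"
  have q: "0 \<le> q" "q < 1"
    using z by (simp_all add: q_def)
  define F where "F = (\<lambda>(n, m). t ^ (n + 1) * besselJ_term (n + 1) (real (n + 1) * z) m)"
  have bound: "norm (F (n, m)) \<le> q ^ (n + 2 * m)" for n m
  proof -
    have "\<bar>t\<bar> ^ (n + 1) \<le> 1"
      using t by (intro power_le_one) auto
    moreover have "\<bar>besselJ_term (n + 1) (real (n + 1) * z) m\<bar> \<le> q ^ (n + 2 * m)"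
      using abs_besselJ_term_le[of "n + 1" z m] q
        power_decreasing[of "n + 2 * m" "2 * m + (n + 1)" q]
      by (simp add: q_def)
    ultimately have "\<bar>t\<bar> ^ (n + 1) * \<bar>besselJ_term (n + 1) (real (n + 1) * z) m\<bar>
        \<le> 1 * q ^ (n + 2 * m)"
      by (intro mult_mono) auto
    then show ?thesis
      using q by (simp add: F_def abs_mult power_abs)
  qed
  have "(\<lambda>x. norm (F x)) summable_on UNIV"
    by (rule summable_on_comparison_test[OF summable_on_geometric_weight[OF q]])
       (use bound in \<open>auto split: prod.split\<close>)
  then have summable: "F summable_on UNIV"
    by (rule summable_on_iff_abs_summable_on_real[THEN iffD2])
  have rows: "(\<lambda>m. F (n, m)) sums (t ^ (n + 1) * besselJ (n + 1) (real (n + 1) * z))" for n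
    unfolding F_def prod.case by (rule sums_mult[OF besselJ_term_sums[OF z]])
  have weight_classes: "(\<Sum>m | 2 * m \<le> N. F (N - 2 * m, m)) = A (N + 1) t * z ^ (N + 1)" for N
  proof -
    have "A (N + 1) t * z ^ (N + 1) = (\<Sum>m | 2 * m < N + 1.
        t ^ (N + 1 - 2 * m) * besselJ_term (N + 1 - 2 * m) (real (N + 1 - 2 * m) * z) m)"
      by (rule A_mul_power_eq_sum_besselJ_term) simp
    also have "\<dots> = (\<Sum>m | 2 * m \<le> N. F (N - 2 * m, m))"
    proof (rule sum.cong)
      fix m assume "m \<in> {m. 2 * m \<le> N}"
      then have "N + 1 - 2 * m = N - 2 * m + 1" by simp
      then show "t ^ (N + 1 - 2 * m) * besselJ_term (N + 1 - 2 * m) (real (N + 1 - 2 * m) * z) m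
          = F (N - 2 * m, m)"
        by (simp only: F_def prod.case)
    qed auto
    finally show ?thesis ..
  qed
  show ?thesis
    using sums_rows_and_sums_weight_classes[OF summable rows] unfolding weight_classes by blast
qed

theorem mainTheorem2:
  shows "(\<forall>n\<ge>1. \<forall>t::real.
            A n t = (-1) ^ n / fact n *
              (\<Sum>k=0..n div 2. (-1) ^ k * real (n choose k) * (real k - real n / 2) ^ n * t ^ (n - 2 * k)))
       \<and> (\<forall>n\<ge>1. A n 0 = 0 \<and> A n 1 = 1 / 2)
       \<and> (\<forall>n\<ge>1. \<forall>t::real. t \<noteq> 0 \<longrightarrow>
            A n t + A n (1 / t) = (-1) ^ n / fact n *
              (\<Sum>k=0..n. (-1) ^ k * real (n choose k) * (real k - real n / 2) ^ n * t powi (int n - 2 * int k)))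
       \<and> (\<exists>\<epsilon>>0. \<forall>t z :: real. \<bar>t\<bar> < \<epsilon> \<and> \<bar>z\<bar> < \<epsilon> \<longrightarrow>
            (\<exists>S. (\<lambda>m. t ^ (m + 1) * besselJ (m + 1) (real (m + 1) * z)) sums S
               \<and> (\<lambda>m. A (m + 1) t * z ^ (m + 1)) sums S))"
proof -
  have "\<exists>\<epsilon>>0. \<forall>t z :: real. \<bar>t\<bar> < \<epsilon> \<and> \<bar>z\<bar> < \<epsilon> \<longrightarrow>
            (\<exists>S. (\<lambda>m. t ^ (m + 1) * besselJ (m + 1) (real (m + 1) * z)) sums S
               \<and> (\<lambda>m. A (m + 1) t * z ^ (m + 1)) sums S)"
  proof (rule exI[of _ "1 / 3"], intro conjI allI impI)
    fix t z :: real
    assume tz: "\<bar>t\<bar> < 1 / 3 \<and> \<bar>z\<bar> < 1 / 3"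
    have "exp 1 * \<bar>z\<bar> \<le> 3 * \<bar>z\<bar>"
      using exp_le by (intro mult_right_mono) auto
    then show "\<exists>S. (\<lambda>m. t ^ (m + 1) * besselJ (m + 1) (real (m + 1) * z)) sums S
               \<and> (\<lambda>m. A (m + 1) t * z ^ (m + 1)) sums S"
      using tz by (intro kapteyn_series_sums) auto
  qed simp
  moreover have "n \<noteq> 0" if "1 \<le> n" for n :: nat
    using that by simp
  ultimately show ?thesis
    using A_eq_sum_kapteyn_coeff A_zero A_one A_add_A_inverse
    unfolding kapteyn_coeff_def by blast
qed

end
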